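(* For any Boolean formulas $\alpha$ and $\beta$, $\alpha\vDash_{CQC}\beta$ if and only if $\beta$ is a logical consequence of $\alpha$ in classical sentential logic.
   Context: $\mathcal H^{(n)}=(\mathbb C^2)^{\otimes n}$ with canonical basis $|x_1,\dots,x_n\rangle$ ($x_i\in\{0,1\}$, $|0\rangle=(1,0)$, $|1\rangle=(0,1)$); a canonical register is a canonical basis vector, identified with its projection; $\mathfrak D(\mathcal H^{(n)})$ is the set of density operators. $P_1^{(n)}$ (resp. $P_0^{(n)}$) is the projection onto the span of the basis vectors with $x_n=1$ (resp. $0$); $\mathtt p(\rho)=\mathrm{tr}(P_1^{(n)}\rho)$; $\rho\preceq\sigma$ iff $\mathtt p(\rho)\le\mathtt p(\sigma)$. $Red^{(j)}_{[n_1,\dots,n_t]}(\rho)$ is the reduced state on the $j$-th factor of $\mathcal H^{(n_1)}\otimes\cdots\otimes\mathcal H^{(n_t)}$. Gates (on the canonical basis, extended linearly; $\oplus$ addition mod 2): $\mathtt{NOT}^{(n)}|x_1..x_n\rangle=|x_1..x_{n-1}\rangle\otimes|1-x_n\rangle$; $\mathtt{XOR}^{(m,n)}|x_1..x_m,y_1..y_n\rangle=|x_1..x_m,y_1..y_{n-1}\rangle\otimes|x_m\oplus y_n\rangle$; $\mathtt T^{(m,n,p)}|x_1..x_m,y_1..y_n,z_1..z_p\rangle=|x_1..x_m,y_1..y_n,z_1..z_{p-1}\rangle\otimes|x_my_n\oplus z_p\rangle$; a gate $G$ acts on density operators by $\rho\mapsto G\rho G^\dagger$. Boolean formulas: built from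 atomic formulas (including distinguished atoms $\mathbf t,\mathbf f$) using $\lnot$ (unary), $\uplus$ (binary), $\intercal$ (ternary); abbreviations $\alpha\land\beta:=\intercal(\alpha,\beta,\mathbf f)$, $\alpha\lor\beta:=\lnot(\lnot\alpha\land\lnot\beta)$. $At(\alpha)$ = number of atomic occurrences in $\alpha$. Syntactical tree: $Level_1^\alpha=(\alpha)$; $Level_{i+1}^\alpha$ is obtained from $Level_i^\alpha=(\beta_1,\dots,\beta_r)$ by replacing each non-atomic $\beta_j$ by its arguments (in order) and keeping atomic $\beta_j$; the last level $Level_h^\alpha$ lists all atomic occurrences; $\mathcal H^{(At\alpha)}=\bigotimes_j\mathcal H^{(At\beta_j)}$. The gate $G^\alpha_{(i)}$ ($1\le i<h$) is the tensor product over $j$ of: identity of $\mathbb C^2$ if $\beta_j$ atomic; $\mathtt{NOT}^{(At\beta)}$ if $\beta_j=\lnot\beta$; $\mathtt{XOR}^{(At\beta',At\beta'')}$ if $\beta_j=\beta'\uplus\beta''$; $\mathtt T^{(At\beta',At\beta'',At\beta''')}$ if $\beta_j=\intercal(\beta',\beta'',\beta''')$. A classical quantum computational model is a map $\mathtt{Hol}$, defined on Boolean formulas only, assigning to each level $Level_i^\alpha$ a qumix in $\mathfrak D(\mathcal H^{(At\alpha)})$, such that: the top level $Level_h^\alpha$ receives (the projection of) a canonical register; $\mathtt{Hol}(Level_i^\alpha)=G^\alpha_{(i)}\mathtt{Hol}(Level_{i+1}^\alpha)G^{\alpha\dagger}_{(i)}$; (normality) for each $\gamma$, with the contextual meaning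 of the occurrence $\beta_j$ in $Level_i^\gamma=(\beta_1,\dots,\beta_r)$ defined as $Red^{(j)}_{[At\beta_1,\dots,At\beta_r]}(\mathtt{Hol}(Level_i^\gamma))$, all occurrences of the same subformula $\beta$ in the tree of $\gamma$ have the same contextual meaning $\mathtt{Hol}^\gamma(\beta)$; every occurrence of $\mathbf f$ (resp. $\mathbf t$) has contextual meaning $P_0^{(1)}$ (resp. $P_1^{(1)}$). $\alpha\vDash_{CQC}\beta$ iff for every Boolean formula $\gamma$ having $\alpha$ and $\beta$ as subformulas and every classical quantum computational model $\mathtt{Hol}$, $\mathtt{Hol}^\gamma(\alpha)\preceq\mathtt{Hol}^\gamma(\beta)$. In classical sentential logic, Boolean formulas are interpreted with $\mathbf t$ true, $\mathbf f$ false, $\lnot$ negation, $\uplus$ exclusive disjunction and $\intercal(\alpha,\beta,\delta)$ as $(\alpha\wedge\beta)\oplus\delta$ (exclusive disjunction of the conjunction of $\alpha,\beta$ with $\delta$). *)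

theory Defs
  imports Complex_Main
begin

text \<open>Neg is the unary connective, Xor the binary exclusive
  disjunction, Tof the ternary Toffoli connective.\<close>

datatype bform = Var nat | TT | FF | Neg bform | Xor bform bform | Tof bform bform bform

fun At :: "bform \<Rightarrow> nat" where
  "At (Neg a) = At a"
| "At (Xor a b) = At a + At b"
| "At (Tof a b c) = At a + At b + At c"
| "At _ = 1"

fun expand :: "bform \<Rightarrow> bform list" where
  "expand (Neg a) = [a]"
| "expand (Xor a b) = [a, b]"
| "expand (Tof a b c) = [a, b, c]"
| "expand a = [a]"

fun depth :: "bform \<Rightarrow> nat" where
  "depth (Neg a) = Suc (depth a)"
| "depth (Xor a b) = Suc (max (depth a) (depth b))"
| "depth (Tof a b c) = Suc (max (depth a) (max (depth b) (depth c)))"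
| "depth _ = 0"

text \<open>Levels of the syntactical tree, 0-indexed: level a i is the paper's Level_(i+1);
  the levels are level a 0, ..., level a (depth a), the last one listing all atomic
  occurrences (so the paper's height h is depth a + 1).\<close>
fun level :: "bform \<Rightarrow> nat \<Rightarrow> bform list" where
  "level a 0 = [a]"
| "level a (Suc i) = concat (map expand (level a i))"

fun subformulas :: "bform \<Rightarrow> bform set" where
  "subformulas (Neg a) = insert (Neg a) (subformulas a)"
| "subformulas (Xor a b) = insert (Xor a b) (subformulas a \<union> subformulas b)"
| "subformulas (Tof a b c) = insert (Tof a b c) (subformulas a \<union> subformulas b \<union> subformulas c)"
| "subformulas a = {a}"

text \<open>An operator on H^(n) is represented by its matrix w.r.t. the canonical basis,
  indexed by bit strings (bool lists of length n; True = 1). Tensor products of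
  basis vectors correspond to list concatenation.\<close>

type_synonym qop = "bool list \<Rightarrow> bool list \<Rightarrow> complex"

definition Bits :: "nat \<Rightarrow> bool list set" where
  "Bits n = {xs. length xs = n}"

definition density :: "nat \<Rightarrow> qop \<Rightarrow> bool" where
  "density n \<rho> \<longleftrightarrow>
     (\<forall>x y. (x \<notin> Bits n \<or> y \<notin> Bits n) \<longrightarrow> \<rho> x y = 0)
   \<and> (\<forall>x y. \<rho> y x = cnj (\<rho> x y))
   \<and> (\<forall>v :: bool list \<Rightarrow> complex.
        0 \<le> Re (\<Sum>x\<in>Bits n. \<Sum>y\<in>Bits n. cnj (v x) * \<rho> x y * v y))
   \<and> (\<Sum>x\<in>Bits n. \<rho> x x) = 1"

definition proj_reg :: "bool list \<Rightarrow> qop" where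
  "proj_reg r = (\<lambda>x y. if x = r \<and> y = r then 1 else 0)"

definition canonical_register :: "nat \<Rightarrow> qop \<Rightarrow> bool" where
  "canonical_register n \<rho> \<longleftrightarrow> (\<exists>r\<in>Bits n. \<rho> = proj_reg r)"

definition P0_1 :: qop where "P0_1 = proj_reg [False]"
definition P1_1 :: qop where "P1_1 = proj_reg [True]"

text \<open>p(rho) = tr(P_1^(n) rho) (real for density operators).\<close>
definition prob :: "nat \<Rightarrow> qop \<Rightarrow> real" where
  "prob n \<rho> = Re (\<Sum>x\<in>{x\<in>Bits n. last x}. \<rho> x x)"

definition preceq :: "nat \<Rightarrow> nat \<Rightarrow> qop \<Rightarrow> qop \<Rightarrow> bool" where
  "preceq n m \<rho> \<sigma> \<longleftrightarrow> prob n \<rho> \<le> prob m \<sigma>"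

text \<open>Reduced state on the j-th factor (0-indexed) of H^(n_1) (x) ... (x) H^(n_t),
  i.e. the partial trace over all the other factors.\<close>
definition Red :: "nat list \<Rightarrow> nat \<Rightarrow> qop \<Rightarrow> qop" where
  "Red ns j \<rho> = (\<lambda>x y. \<Sum>p\<in>Bits (sum_list (take j ns)). \<Sum>q\<in>Bits (sum_list (drop (Suc j) ns)).
                        \<rho> (p @ x @ q) (p @ y @ q))"

text \<open>Basis maps of the gates (NOT^(n), XOR^(m,n), T^(m,n,p)).\<close>
definition NOTg :: "bool list \<Rightarrow> bool list" where
  "NOTg xs = butlast xs @ [\<not> last xs]"

definition XORg :: "nat \<Rightarrow> bool list \<Rightarrow> bool list" where
  "XORg m xs = butlast xs @ [xs ! (m - 1) \<noteq> last xs]"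

definition TOFg :: "nat \<Rightarrow> nat \<Rightarrow> bool list \<Rightarrow> bool list" where
  "TOFg m n xs = butlast xs @ [(xs ! (m - 1) \<and> xs ! (m + n - 1)) \<noteq> last xs]"

fun gate_of :: "bform \<Rightarrow> bool list \<Rightarrow> bool list" where
  "gate_of (Neg a) = NOTg"
| "gate_of (Xor a b) = XORg (At a)"
| "gate_of (Tof a b c) = TOFg (At a) (At b)"
| "gate_of _ = id"

text \<open>Basis map of G_(i): tensor product of the gates of the formulas of a level.\<close>
fun level_gate :: "bform list \<Rightarrow> bool list \<Rightarrow> bool list" where
  "level_gate [] xs = []"
| "level_gate (b # bs) xs = gate_of b (take (At b) xs) @ level_gate bs (drop (At b) xs)"

definition gate_matrix :: "(bool list \<Rightarrow> bool list) \<Rightarrow> qop" where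
  "gate_matrix g = (\<lambda>x y. if x = g y then 1 else 0)"

definition apply_gate :: "nat \<Rightarrow> (bool list \<Rightarrow> bool list) \<Rightarrow> qop \<Rightarrow> qop" where
  "apply_gate n g \<rho> = (\<lambda>x y. \<Sum>u\<in>Bits n. \<Sum>v\<in>Bits n.
       gate_matrix g x u * \<rho> u v * cnj (gate_matrix g y v))"

text \<open>Hol g i is the qumix assigned to level i (0-indexed) of the tree of g.\<close>
type_synonym holmap = "bform \<Rightarrow> nat \<Rightarrow> qop"

definition occurs :: "bform \<Rightarrow> bform \<Rightarrow> nat \<Rightarrow> nat \<Rightarrow> bool" where
  "occurs g b i j \<longleftrightarrow> i \<le> depth g \<and> j < length (level g i) \<and> level g i ! j = b"

definition ctx_meaning :: "holmap \<Rightarrow> bform \<Rightarrow> nat \<Rightarrow> nat \<Rightarrow> qop" where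
  "ctx_meaning Hol g i j = Red (map At (level g i)) j (Hol g i)"

definition cqc_model :: "holmap \<Rightarrow> bool" where
  "cqc_model Hol \<longleftrightarrow> (\<forall>g.
      (\<forall>i\<le>depth g. density (At g) (Hol g i))
    \<and> canonical_register (At g) (Hol g (depth g))
    \<and> (\<forall>i<depth g. Hol g i = apply_gate (At g) (level_gate (level g i)) (Hol g (Suc i)))
    \<and> (\<forall>b i j i' j'. occurs g b i j \<and> occurs g b i' j' \<longrightarrow>
          ctx_meaning Hol g i j = ctx_meaning Hol g i' j')
    \<and> (\<forall>i j. occurs g FF i j \<longrightarrow> ctx_meaning Hol g i j = P0_1)
    \<and> (\<forall>i j. occurs g TT i j \<longrightarrow> ctx_meaning Hol g i j = P1_1))"

text \<open>Contextual meaning Hol^g(b) of a subformula b of g (well defined by normality).\<close>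
definition hol_meaning :: "holmap \<Rightarrow> bform \<Rightarrow> bform \<Rightarrow> qop" where
  "hol_meaning Hol g b = (SOME \<rho>. \<exists>i j. occurs g b i j \<and> \<rho> = ctx_meaning Hol g i j)"

definition cqc_entails :: "bform \<Rightarrow> bform \<Rightarrow> bool" where
  "cqc_entails a b \<longleftrightarrow> (\<forall>g Hol. a \<in> subformulas g \<and> b \<in> subformulas g \<and> cqc_model Hol \<longrightarrow>
      preceq (At a) (At b) (hol_meaning Hol g a) (hol_meaning Hol g b))"

fun eval :: "(nat \<Rightarrow> bool) \<Rightarrow> bform \<Rightarrow> bool" where
  "eval v (Var k) = v k"
| "eval v TT = True"
| "eval v FF = False"
| "eval v (Neg a) = (\<not> eval v a)"
| "eval v (Xor a b) = (eval v a \<noteq> eval v b)"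
| "eval v (Tof a b c) = ((eval v a \<and> eval v b) \<noteq> eval v c)"

definition classical_consequence :: "bform \<Rightarrow> bform \<Rightarrow> bool" where
  "classical_consequence a b \<longleftrightarrow> (\<forall>v. eval v a \<longrightarrow> eval v b)"

end

theory Submission
  imports Defs
begin

text \<open>Every canonical register is mapped by the gates of a formula tree to a canonical
  register, and partial traces of canonical registers are canonical registers. Hence the
  top level of a model (a canonical register whose atomic blocks are forced by normality
  to be consistent) determines a valuation v, and then every level, and therefore every
  contextual meaning, is the canonical register obtained by classically computing the
  formulas under v. The contextual meaning of a subformula c is then the register whose
  last bit is the truth value of c, so its probability is 1 or 0 according as c is true
  or false under v. Conversely every valuation yields such a model.\<close>

lemma At_pos [simp]: "0 < At b"
  by (induction b) auto

fun register :: "(nat \<Rightarrow> bool) \<Rightarrow> bform \<Rightarrow> bool list" where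
  "register v (Var k) = [v k]"
| "register v TT = [True]"
| "register v FF = [False]"
| "register v (Neg a) = NOTg (register v a)"
| "register v (Xor a b) = XORg (At a) (register v a @ register v b)"
| "register v (Tof a b c) = TOFg (At a) (At b) (register v a @ register v b @ register v c)"

lemma length_register [simp]: "length (register v b) = At b"
  by (induction b) (auto simp: NOTg_def XORg_def TOFg_def)

lemma register_not_Nil [simp]: "register v b \<noteq> []"
  using length_register[of v b] At_pos[of b] by (metis list.size(3) less_irrefl)

lemma nth_append_last:
  assumes "length xs = n" "xs \<noteq> []"
  shows "(xs @ ys) ! (n - 1) = last xs"
  using assms by (cases xs rule: rev_cases) (auto simp: nth_append)

lemma last_register: "last (register v b) = eval v b"
proof (induction b)
  case (Xor a b)
  have "(register v a @ register v b) ! (At a - 1) = last (register v a)"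
    by (rule nth_append_last) simp_all
  with Xor show ?case by (simp add: XORg_def)
next
  case (Tof a b c)
  have "(register v a @ register v b @ register v c) ! (At a + At b - 1)
      = (register v b @ register v c) ! (At b - 1)"
    using nth_append_length_plus[of "register v a" "register v b @ register v c" "At b - 1"]
    by (simp add: Suc_leI)
  also have "\<dots> = last (register v b)"
    by (rule nth_append_last) simp_all
  finally have "(register v a @ register v b @ register v c) ! (At a + At b - 1) = last (register v b)" .
  moreover have "(register v a @ register v b @ register v c) ! (At a - 1) = last (register v a)"
    by (rule nth_append_last) simp_all
  ultimately show ?case using Tof by (simp add: TOFg_def)
qed (auto simp: NOTg_def)

lemma length_concat_register: "length (concat (map (register v) L)) = sum_list (map At L)"
  by (induction L) auto

lemma register_eq_gate_of: "register v b = gate_of b (concat (map (register v) (expand b)))"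
  by (cases b) auto

lemma level_gate_concat:
  assumes "\<forall>b\<in>set L. length (h b) = At b"
  shows "level_gate L (concat (map h L)) = concat (map (\<lambda>b. gate_of b (h b)) L)"
  using assms by (induction L) auto

lemma level_gate_register:
  "level_gate L (concat (map (register v) (concat (map expand L)))) = concat (map (register v) L)"
proof -
  have "concat (map (register v) (concat (map expand L)))
      = concat (map (\<lambda>b. concat (map (register v) (expand b))) L)"
    by (induction L) auto
  moreover have "length (concat (map (register v) (expand b))) = At b" for b
    by (cases b) auto
  ultimately show ?thesis
    by (simp add: level_gate_concat flip: register_eq_gate_of)
qed

lemma sum_At_level: "sum_list (map At (level g i)) = At g"
proof -
  have "sum_list (map At (concat (map expand L))) = sum_list (map At L)" for L
  proof (induction L)
    case (Cons b L)
    then show ?case by (cases b) auto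
  qed simp
  then show ?thesis by (induction i) auto
qed

lemma level_Suc_expand: "level g (Suc i) = concat (map (\<lambda>c. level c i) (expand g))"
proof (induction i)
  case 0
  show ?case by (cases g) auto
next
  case (Suc i)
  have "concat (map expand (concat (map (\<lambda>c. level c i) cs)))
      = concat (map (\<lambda>c. level c (Suc i)) cs)" for cs
    by (induction cs) auto
  with Suc show ?case by simp
qed

lemma depth_in_level:
  assumes "i \<le> depth g" "b \<in> set (level g i)"
  shows "depth b + i \<le> depth g"
  using assms
proof (induction i arbitrary: b)
  case (Suc i)
  then obtain c where c: "c \<in> set (level g i)" "b \<in> set (expand c)" by auto
  with Suc have "depth c + i \<le> depth g" by simp
  with c(2) Suc.prems show ?case by (cases c) auto
qed simp

lemma subformula_in_level: "b \<in> subformulas g \<Longrightarrow> \<exists>i\<le>depth g. b \<in> set (level g i)"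
proof (induction g)
  case (Neg a)
  then consider "b = Neg a" | "b \<in> subformulas a" by auto
  then show ?case
  proof cases
    case 2
    with Neg obtain i where "i \<le> depth a" "b \<in> set (level a i)" by auto
    then show ?thesis
      by (intro exI[of _ "Suc i"]) (auto simp: level_Suc_expand simp del: level.simps)
  qed auto
next
  case (Xor a c)
  then consider "b = Xor a c" | d where "d \<in> {a, c}" "b \<in> subformulas d" by auto
  then show ?case
  proof cases
    case 2
    with Xor obtain i where "i \<le> depth d" "b \<in> set (level d i)" by auto
    with 2 show ?thesis
      by (intro exI[of _ "Suc i"]) (auto simp: level_Suc_expand simp del: level.simps)
  qed auto
next
  case (Tof a c e)
  then consider "b = Tof a c e" | d where "d \<in> {a, c, e}" "b \<in> subformulas d" by auto
  then show ?case
  proof cases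
    case 2
    with Tof obtain i where "i \<le> depth d" "b \<in> set (level d i)" by auto
    with 2 show ?thesis
      by (intro exI[of _ "Suc i"]) (auto simp: level_Suc_expand simp del: level.simps)
  qed auto
qed auto

lemma subformula_occurs: "b \<in> subformulas g \<Longrightarrow> \<exists>i j. occurs g b i j"
  unfolding occurs_def by (metis subformula_in_level in_set_conv_nth)

lemma subformulas_self: "g \<in> subformulas g"
  by (cases g) auto

lemma finite_Bits [simp]: "finite (Bits n)"
  unfolding Bits_def by (rule finite_list_length)

lemma sum_sum_delta:
  assumes "finite A" "r \<in> A" "finite B" "s \<in> B"
  shows "(\<Sum>u\<in>A. \<Sum>w\<in>B. if u = r \<and> w = s then h u w else 0) = (h r s :: complex)"
proof -
  have "(\<Sum>w\<in>B. if u = r \<and> w = s then h u w else 0) = (if u = r then h u s else 0)" for u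
    using assms(3,4) by (cases "u = r") (simp_all add: sum.delta')
  with assms(1,2) show ?thesis by (simp add: sum.delta')
qed

lemma proj_reg_inj: "proj_reg r = proj_reg s \<Longrightarrow> r = s"
  by (metis proj_reg_def zero_neq_one)

lemma apply_gate_proj_reg:
  assumes "r \<in> Bits n"
  shows "apply_gate n g (proj_reg r) = proj_reg (g r)"
proof (intro ext)
  fix x y
  have "apply_gate n g (proj_reg r) x y = (\<Sum>u\<in>Bits n. \<Sum>w\<in>Bits n.
      if u = r \<and> w = r then gate_matrix g x u * cnj (gate_matrix g y w) else 0)"
    unfolding apply_gate_def proj_reg_def by (intro sum.cong refl) simp
  also have "\<dots> = proj_reg (g r) x y"
    using assms by (simp add: sum_sum_delta gate_matrix_def proj_reg_def)
  finally show "apply_gate n g (proj_reg r) x y = proj_reg (g r) x y" .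
qed

lemma density_proj_reg:
  assumes "r \<in> Bits n"
  shows "density n (proj_reg r)"
proof -
  have "(\<Sum>x\<in>Bits n. \<Sum>y\<in>Bits n. cnj (v x) * proj_reg r x y * v y) = cnj (v r) * v r"
    for v :: "bool list \<Rightarrow> complex"
  proof -
    have "(\<Sum>x\<in>Bits n. \<Sum>y\<in>Bits n. cnj (v x) * proj_reg r x y * v y)
        = (\<Sum>x\<in>Bits n. \<Sum>y\<in>Bits n. if x = r \<and> y = r then cnj (v x) * v y else 0)"
      unfolding proj_reg_def by (intro sum.cong refl) simp
    with assms show ?thesis by (simp add: sum_sum_delta)
  qed
  with assms show ?thesis
    unfolding density_def by (auto simp: proj_reg_def)
qed

lemma prob_proj_reg:
  assumes "r \<in> Bits n"
  shows "prob n (proj_reg r) = (if last r then 1 else 0)"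
proof -
  have "(\<Sum>x\<in>{x\<in>Bits n. last x}. proj_reg r x x) = (\<Sum>x\<in>{x\<in>Bits n. last x}. if x = r then 1 else 0)"
    by (intro sum.cong refl) (simp add: proj_reg_def)
  with assms show ?thesis
    unfolding prob_def by (simp add: sum.delta')
qed

lemma prob_proj_register: "prob (At a) (proj_reg (register v a)) = (if eval v a then 1 else 0)"
  by (simp add: prob_proj_reg Bits_def last_register)

definition block :: "nat list \<Rightarrow> nat \<Rightarrow> bool list \<Rightarrow> bool list" where
  "block ns j r = take (ns ! j) (drop (sum_list (take j ns)) r)"

lemma length_split_at_nth:
  assumes "length r = sum_list ns" "j < length ns"
  shows "length r = sum_list (take j ns) + ns ! j + sum_list (drop (Suc j) ns)"
  using assms by (metis id_take_nth_drop sum_list_append sum_list.Cons add.assoc)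

lemma append_middle_eq_iff:
  assumes "length r = s + m + t" "length p = s" "length q = t"
  shows "p @ x @ q = r \<longleftrightarrow> p = take s r \<and> q = drop (s + m) r \<and> x = take m (drop s r)"
proof
  assume r: "p @ x @ q = r"
  then have "length x = m" using assms by auto
  with r assms(2) show "p = take s r \<and> q = drop (s + m) r \<and> x = take m (drop s r)"
    by auto
next
  assume "p = take s r \<and> q = drop (s + m) r \<and> x = take m (drop s r)"
  then show "p @ x @ q = r"
    by (metis append_take_drop_id drop_drop add.commute)
qed

lemma Red_proj_reg:
  assumes "length r = sum_list ns" "j < length ns"
  shows "Red ns j (proj_reg r) = proj_reg (block ns j r)"
proof (intro ext)
  fix x y
  define s m t where "s = sum_list (take j ns)" and "m = ns ! j"
    and "t = sum_list (drop (Suc j) ns)"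
  have lr: "length r = s + m + t"
    using length_split_at_nth[OF assms] unfolding s_def m_def t_def .
  let ?b = "take m (drop s r)"
  have "Red ns j (proj_reg r) x y = (\<Sum>p\<in>Bits s. \<Sum>q\<in>Bits t.
      if p = take s r \<and> q = drop (s + m) r then (if x = ?b \<and> y = ?b then 1 else 0) else 0)"
    unfolding Red_def s_def[symmetric] t_def[symmetric]
  proof (intro sum.cong refl)
    fix p q assume "p \<in> Bits s" "q \<in> Bits t"
    then have "p @ z @ q = r \<longleftrightarrow> p = take s r \<and> q = drop (s + m) r \<and> z = ?b" for z
      using append_middle_eq_iff[OF lr] by (simp add: Bits_def)
    then show "proj_reg r (p @ x @ q) (p @ y @ q)
        = (if p = take s r \<and> q = drop (s + m) r then (if x = ?b \<and> y = ?b then 1 else 0) else 0)"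
      unfolding proj_reg_def by auto
  qed
  also have "\<dots> = (if x = ?b \<and> y = ?b then 1 else 0)"
    using lr by (intro sum_sum_delta finite_Bits) (simp_all add: Bits_def)
  also have "\<dots> = proj_reg (block ns j r) x y"
    unfolding proj_reg_def block_def s_def m_def by simp
  finally show "Red ns j (proj_reg r) x y = proj_reg (block ns j r) x y" .
qed

lemma length_block:
  assumes "length r = sum_list ns" "j < length ns"
  shows "length (block ns j r) = ns ! j"
  using length_split_at_nth[OF assms] unfolding block_def by simp

lemma block_Cons_0: "block (n # ns) 0 r = take n r"
  by (simp add: block_def)

lemma block_Cons_Suc: "block (n # ns) (Suc j) r = block ns j (drop n r)"
  by (simp add: block_def add.commute)

lemma block_concat:
  assumes "\<forall>b\<in>set L. length (h b) = At b" "j < length L"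
  shows "block (map At L) j (concat (map h L)) = h (L ! j)"
  using assms
proof (induction L arbitrary: j)
  case (Cons b L)
  then show ?case by (cases j) (auto simp: block_Cons_0 block_Cons_Suc)
qed simp

lemma concat_eq_if_blocks:
  assumes "length r = sum_list (map At L)" "\<forall>j<length L. block (map At L) j r = h (L ! j)"
  shows "r = concat (map h L)"
  using assms
proof (induction L arbitrary: r)
  case (Cons b L)
  have "take (At b) r = h b"
    using Cons.prems(2)[rule_format, of 0] by (simp add: block_Cons_0)
  moreover have "drop (At b) r = concat (map h L)"
    using Cons.prems by (intro Cons.IH) (auto simp: block_Cons_Suc[symmetric])
  ultimately show ?case by (metis append_take_drop_id concat.simps(2) list.map(2))
qed simp

definition level_register :: "(nat \<Rightarrow> bool) \<Rightarrow> bform \<Rightarrow> nat \<Rightarrow> bool list" where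
  "level_register v g i = concat (map (register v) (level g i))"

lemma level_register_Bits: "level_register v g i \<in> Bits (At g)"
  by (simp add: level_register_def Bits_def length_concat_register sum_At_level)

lemma ctx_meaning_proj_level_register:
  assumes "Hol g i = proj_reg (level_register v g i)" "j < length (level g i)"
  shows "ctx_meaning Hol g i j = proj_reg (register v (level g i ! j))"
proof -
  have "ctx_meaning Hol g i j = proj_reg (block (map At (level g i)) j (level_register v g i))"
    unfolding ctx_meaning_def assms(1) using assms(2)
    by (intro Red_proj_reg) (simp_all add: level_register_def length_concat_register)
  with assms(2) show ?thesis
    by (simp add: level_register_def block_concat)
qed

definition classical_model :: "(nat \<Rightarrow> bool) \<Rightarrow> holmap" where
  "classical_model v g i = proj_reg (level_register v g i)"

lemma cqc_model_classical_model: "cqc_model (classical_model v)"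
  unfolding cqc_model_def
proof (rule allI, intro conjI)
  fix g
  have ctx: "ctx_meaning (classical_model v) g i j = proj_reg (register v b)"
    if "occurs g b i j" for b i j
    using that by (auto simp: occurs_def classical_model_def intro: ctx_meaning_proj_level_register)
  show "\<forall>i\<le>depth g. density (At g) (classical_model v g i)"
    by (simp add: classical_model_def density_proj_reg level_register_Bits)
  show "canonical_register (At g) (classical_model v g (depth g))"
    unfolding canonical_register_def classical_model_def using level_register_Bits by blast
  show "\<forall>i<depth g. classical_model v g i
      = apply_gate (At g) (level_gate (level g i)) (classical_model v g (Suc i))"
    by (simp add: classical_model_def apply_gate_proj_reg level_register_Bits del: level.simps)
       (simp add: level_register_def level_gate_register)
  show "\<forall>b i j i' j'. occurs g b i j \<and> occurs g b i' j' \<longrightarrow>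
      ctx_meaning (classical_model v) g i j = ctx_meaning (classical_model v) g i' j'"
    by (metis ctx)
  show "\<forall>i j. occurs g FF i j \<longrightarrow> ctx_meaning (classical_model v) g i j = P0_1"
    by (simp add: ctx P0_1_def)
  show "\<forall>i j. occurs g TT i j \<longrightarrow> ctx_meaning (classical_model v) g i j = P1_1"
    by (simp add: ctx P1_1_def)
qed

lemma hol_meaning_eq_ctx_meaning:
  assumes "cqc_model Hol" "occurs g b i j"
  shows "hol_meaning Hol g b = ctx_meaning Hol g i j"
proof -
  have "\<exists>\<rho> i j. occurs g b i j \<and> \<rho> = ctx_meaning Hol g i j"
    using assms(2) by blast
  then have "\<exists>i j. occurs g b i j \<and> hol_meaning Hol g b = ctx_meaning Hol g i j"
    unfolding hol_meaning_def by (rule someI_ex)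
  with assms show ?thesis unfolding cqc_model_def by metis
qed

text \<open>In a model the meaning of a variable is proj_reg [c] for some bit c, which is
  read off the diagonal entry at [True].\<close>
definition valuation_of :: "holmap \<Rightarrow> bform \<Rightarrow> nat \<Rightarrow> bool" where
  "valuation_of Hol g k \<longleftrightarrow> hol_meaning Hol g (Var k) [True] [True] = 1"

lemma atom_block_eq_register:
  assumes M: "cqc_model Hol" and top: "Hol g (depth g) = proj_reg r"
    and r: "length r = At g" and j: "j < length (level g (depth g))"
  defines "L \<equiv> level g (depth g)"
  shows "block (map At L) j r = register (valuation_of Hol g) (L ! j)"
proof -
  let ?c = "block (map At L) j r"
  have occ: "occurs g (L ! j) (depth g) j"
    using j by (simp add: occurs_def L_def)
  have ctx: "ctx_meaning Hol g (depth g) j = proj_reg ?c"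
    unfolding ctx_meaning_def top L_def[symmetric]
    using r j by (intro Red_proj_reg) (simp_all add: L_def sum_At_level)
  have len: "length ?c = At (L ! j)"
    using length_block[of r "map At L" j] r j by (simp add: L_def sum_At_level)
  have "depth (L ! j) = 0"
    using depth_in_level[of "depth g" g "L ! j"] j by (simp add: L_def)
  then consider k where "L ! j = Var k" | "L ! j = TT" | "L ! j = FF"
    by (cases "L ! j") auto
  then show ?thesis
  proof cases
    case (1 k)
    with len obtain c where c: "?c = [c]" by (cases ?c) auto
    with 1 ctx hol_meaning_eq_ctx_meaning[OF M occ] have "valuation_of Hol g k = c"
      by (simp add: valuation_of_def proj_reg_def)
    with 1 c show ?thesis by simp
  next
    case 2
    with M occ ctx show ?thesis
      unfolding cqc_model_def P1_1_def by (metis proj_reg_inj register.simps(2))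
  next
    case 3
    with M occ ctx show ?thesis
      unfolding cqc_model_def P0_1_def by (metis proj_reg_inj register.simps(3))
  qed
qed

lemma cqc_model_levels:
  assumes M: "cqc_model Hol" and "i \<le> depth g"
  shows "Hol g i = classical_model (valuation_of Hol g) g i"
  using assms(2)
proof (induction rule: inc_induct)
  case base
  obtain r where r: "r \<in> Bits (At g)" "Hol g (depth g) = proj_reg r"
    using M unfolding cqc_model_def canonical_register_def by blast
  then have "r = level_register (valuation_of Hol g) g (depth g)"
    unfolding level_register_def
    by (intro concat_eq_if_blocks allI impI atom_block_eq_register[OF M])
       (simp_all add: Bits_def sum_At_level)
  with r show ?case by (simp add: classical_model_def)
next
  case (step i)
  let ?G = "apply_gate (At g) (level_gate (level g i))"
  have "Hol g i = ?G (Hol g (Suc i))"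
    using M step.hyps unfolding cqc_model_def by blast
  also have "\<dots> = ?G (classical_model (valuation_of Hol g) g (Suc i))"
    using step.IH by simp
  also have "\<dots> = classical_model (valuation_of Hol g) g i"
    using cqc_model_classical_model step.hyps unfolding cqc_model_def by metis
  finally show ?case .
qed

lemma hol_meaning_classical_model:
  assumes "c \<in> subformulas g"
  shows "hol_meaning (classical_model v) g c = proj_reg (register v c)"
proof -
  obtain i j where occ: "occurs g c i j" using subformula_occurs[OF assms] by blast
  then have "ctx_meaning (classical_model v) g i j = proj_reg (register v c)"
    by (auto simp: occurs_def classical_model_def intro: ctx_meaning_proj_level_register)
  with occ show ?thesis
    by (simp add: hol_meaning_eq_ctx_meaning cqc_model_classical_model)
qed

lemma hol_meaning_cqc_model:
  assumes M: "cqc_model Hol" and c: "c \<in> subformulas g"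
  shows "hol_meaning Hol g c = proj_reg (register (valuation_of Hol g) c)"
proof -
  obtain i j where occ: "occurs g c i j" using subformula_occurs[OF c] by blast
  then have "ctx_meaning Hol g i j = ctx_meaning (classical_model (valuation_of Hol g)) g i j"
    using cqc_model_levels[OF M] by (simp add: occurs_def ctx_meaning_def)
  with occ M c show ?thesis
    by (simp add: hol_meaning_eq_ctx_meaning cqc_model_classical_model
        flip: hol_meaning_classical_model)
qed

theorem lemma4p19:
  fixes a b :: bform
  shows "cqc_entails a b \<longleftrightarrow> classical_consequence a b"
proof
  assume entails: "cqc_entails a b"
  show "classical_consequence a b"
    unfolding classical_consequence_def
  proof (intro allI impI)
    fix v assume "eval v a"
    have "a \<in> subformulas (Xor a b)" "b \<in> subformulas (Xor a b)"
      using subformulas_self by auto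
    with entails have "preceq (At a) (At b)
        (hol_meaning (classical_model v) (Xor a b) a) (hol_meaning (classical_model v) (Xor a b) b)"
      unfolding cqc_entails_def using cqc_model_classical_model by blast
    with \<open>eval v a\<close> \<open>a \<in> _\<close> \<open>b \<in> _\<close> show "eval v b"
      by (simp add: preceq_def hol_meaning_classical_model prob_proj_register split: if_splits)
  qed
next
  assume "classical_consequence a b"
  then show "cqc_entails a b"
    unfolding cqc_entails_def classical_consequence_def
    by (auto simp: preceq_def hol_meaning_cqc_model prob_proj_register)
qed

end
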